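(* Let $\mathscr H$ and $\mathscr F$ be RKHSs on sets $\mathcal X$ and $\mathcal Y$ with feature maps $\phi$ and $\psi$, let $\Phi=[\phi(x_1),\dots,\phi(x_m)]$ and $\Psi=[\psi(y_1),\dots,\psi(y_n)]$ each consist of linearly independent elements, let $B\in\mathbb R^{n\times m}$, and let $S=\Psi B\Phi^\top\colon\mathscr H\to\mathscr F$. Let $G_\Phi=\Phi^\top\Phi$, $G_\Psi=\Psi^\top\Psi$ and $M=B^\top G_\Psi B\in\mathbb R^{m\times m}$. Assume that each singular value of $S$ has multiplicity $1$. Let $\lambda_1,\dots,\lambda_r$ be the nonzero eigenvalues of $MG_\Phi\in\mathbb R^{m\times m}$, counted with multiplicities, with corresponding eigenvectors $\mathbf w_1,\dots,\mathbf w_r\in\mathbb R^m$, and set $$v_i=(\mathbf w_i^\top G_\Phi\mathbf w_i)^{-1/2}\,\Phi\mathbf w_i,\qquad u_i=\lambda_i^{-1/2}Sv_i.$$ Then the singular value decomposition of $S$ is $$S=\sum_{i=1}^r\lambda_i^{1/2}\,(u_i\otimes v_i).$$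
   Context: An RKHS $\mathscr H$ on $\mathcal X$ with kernel $k$ has feature map $\phi(x)=k(x,\cdot)$ (similarly $\mathscr F$ with kernel $l$, feature map $\psi$). Feature matrices are row vectors: $\Phi\mathbf a=\sum_j a_j\phi(x_j)$ for $\mathbf a\in\mathbb R^m$; $\Phi^\top v=(\langle\phi(x_j),v\rangle_{\mathscr H})_j$ for $v\in\mathscr H$; $G_\Phi=(k(x_i,x_j))_{ij}$ and $G_\Psi=(l(y_i,y_j))_{ij}$ are the Gram matrices. Thus $Sv=\sum_i\psi(y_i)\sum_jb_{ij}\langle\phi(x_j),v\rangle$. The tensor product operator is $(y\otimes x)h=\langle x,h\rangle y$; a singular value decomposition $\sum_i\sigma_i(u_i\otimes v_i)$ has orthonormal systems $\{u_i\}\subseteq\mathscr F$, $\{v_i\}\subseteq\mathscr H$ and $\sigma_i>0$. *)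

theory Defs
  imports "HOL-Analysis.Inner_Product" "Jordan_Normal_Form.Char_Poly"
begin

text \<open>An RKHS on a set 'x is modelled as a real Hilbert space 'h together with its
 feature map phi; the reproducing kernel is k x x' = inner (phi x) (phi x').
 The RKHS property (elements of 'h are identified with the functions
 x |-> inner h (phi x)) says that this identification is injective.\<close>
definition rkhs_feature :: "('x \<Rightarrow> 'h::{real_inner,complete_space}) \<Rightarrow> bool" where
  "rkhs_feature phi \<longleftrightarrow> (\<forall>h. (\<forall>x. inner h (phi x) = 0) \<longrightarrow> h = 0)"

definition lin_indep_family :: "('x \<Rightarrow> 'h::real_vector) \<Rightarrow> (nat \<Rightarrow> 'x) \<Rightarrow> nat \<Rightarrow> bool" where
  "lin_indep_family phi x m \<longleftrightarrow>
     (\<forall>a. (\<Sum>j<m. a j *\<^sub>R phi (x j)) = 0 \<longrightarrow> (\<forall>j<m. a j = 0))"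

definition gram :: "('x \<Rightarrow> 'h::real_inner) \<Rightarrow> (nat \<Rightarrow> 'x) \<Rightarrow> nat \<Rightarrow> real mat" where
  "gram phi x m = mat m m (\<lambda>(i,j). inner (phi (x i)) (phi (x j)))"

definition feat_comb :: "('x \<Rightarrow> 'h::real_vector) \<Rightarrow> (nat \<Rightarrow> 'x) \<Rightarrow> nat \<Rightarrow> real vec \<Rightarrow> 'h" where
  "feat_comb phi x m a = (\<Sum>j<m. (a $ j) *\<^sub>R phi (x j))"

text \<open>S = Psi B Phi^T, i.e. S v = sum_i psi(y_i) sum_j b_ij inner (phi x_j) v.\<close>
definition op_S :: "('x \<Rightarrow> 'h::real_inner) \<Rightarrow> (nat \<Rightarrow> 'x) \<Rightarrow> nat \<Rightarrow>
                    ('y \<Rightarrow> 'f::real_inner) \<Rightarrow> (nat \<Rightarrow> 'y) \<Rightarrow> nat \<Rightarrow> real mat \<Rightarrow> 'h \<Rightarrow> 'f" where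
  "op_S phi x m psi y n B v =
     (\<Sum>i<n. (\<Sum>j<m. B $$ (i,j) * inner (phi (x j)) v) *\<^sub>R psi (y i))"

definition tensor_op :: "'f::real_vector \<Rightarrow> 'h::real_inner \<Rightarrow> 'h \<Rightarrow> 'f" where
  "tensor_op u v h = inner v h *\<^sub>R u"

text \<open>For sigma > 0: the space {v. S^* S v = sigma^2 v}, written without naming the
 adjoint: S^* S v = sigma^2 v iff inner (S h) (S v) = sigma^2 inner h v for all h.
 sigma is a singular value of S iff this space is nonzero, and its multiplicity
 is the dimension of this space.\<close>
definition sv_space :: "('h::real_inner \<Rightarrow> 'f::real_inner) \<Rightarrow> real \<Rightarrow> 'h set" where
  "sv_space S \<sigma> = {v. \<forall>h. inner (S h) (S v) = \<sigma>\<^sup>2 * inner h v}"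

definition singular_value :: "('h::real_inner \<Rightarrow> 'f::real_inner) \<Rightarrow> real \<Rightarrow> bool" where
  "singular_value S \<sigma> \<longleftrightarrow> \<sigma> > 0 \<and> sv_space S \<sigma> \<noteq> {0}"

definition sv_multiplicity :: "('h::real_inner \<Rightarrow> 'f::real_inner) \<Rightarrow> real \<Rightarrow> nat" where
  "sv_multiplicity S \<sigma> = dim (sv_space S \<sigma>)"

end

(* In the coordinates a |-> Phi a of span Phi, the operator S^* S is the matrix T = M G_Phi:
   <S h, S (Phi b)> = <h, Phi (T b)>. So T is self-adjoint for the positive definite form
   a . G_Phi b, hence diagonalizable, and Phi maps each eigenvector of T with eigenvalue
   lambda > 0 to a right singular vector of S for sqrt lambda. Multiplicity one makes these
   eigenspaces lines, so by diagonalizability no lambda_i is a repeated root of the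
   characteristic polynomial: the lambda_i are distinct, the w_i are G_Phi-orthogonal and the
   v_i, u_i orthonormal. A vector z orthogonal to all v_i satisfies S z = S (Phi a) with a
   G_Phi-orthogonal to every eigenvector of nonzero eigenvalue; expanding a in an eigenbasis
   gives |S (Phi a)|^2 = a . G_Phi T a = 0, and S = sum sqrt lambda_i (u_i (x) v_i) follows. *)

theory Submission
  imports Defs "Jordan_Normal_Form.Jordan_Normal_Form_Uniqueness"
    "Jordan_Normal_Form.Jordan_Normal_Form_Existence"
begin

lemma sum_list_min_2_eq_min_1_imp_le_1:
  assumes "sum_list (map (min 2) ks) = sum_list (map (min (1::nat)) ks)"
  shows "\<forall>k\<in>set ks. k \<le> 1"
  using assms
proof (induct ks)
  case (Cons k ks)
  have "sum_list (map (min 1) ks) \<le> sum_list (map (min (2::nat)) ks)"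
    by (intro sum_list_mono) simp
  with Cons show ?case by auto
qed simp

lemma jordan_matrix_diagonal:
  assumes "\<forall>p\<in>set n_as. fst p = 1"
  shows "jordan_matrix (n_as :: (nat \<times> 'a::{zero,one}) list) =
    mat (length n_as) (length n_as) (\<lambda>(i, j). if i = j then snd (n_as ! i) else 0)"
  using assms
proof (induct n_as)
  case Nil
  show ?case by (intro eq_matI) (auto simp: jordan_matrix_def)
next
  case (Cons p n_as)
  obtain a where p: "p = (1, a)" using Cons.prems by (cases p) auto
  have "sum_list (map fst n_as) = length n_as"
    using Cons.prems by (induct n_as) auto
  with Cons show ?case
    unfolding p jordan_matrix_Cons
    by (intro eq_matI) (auto simp: four_block_mat_def jordan_block_def nth_Cons')
qed

lemma jordan_nf_blocks_size_one:
  assumes jnf: "jordan_nf A n_as"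
    and gen_eigenspace: "\<And>ev. dim_gen_eigenspace A ev 2 = dim_gen_eigenspace A ev 1"
  shows "\<forall>p\<in>set n_as. fst p = 1"
proof
  fix p assume p: "p \<in> set n_as"
  obtain k ev where pk: "p = (k, ev)" by force
  have "\<forall>k\<in>set (map fst [(k, e)\<leftarrow>n_as. e = ev]). k \<le> 1"
    using gen_eigenspace[of ev] unfolding dim_gen_eigenspace[OF jnf]
    by (rule sum_list_min_2_eq_min_1_imp_le_1)
  hence "k \<le> 1" using p pk by force
  moreover have "k \<noteq> 0" using jnf p pk unfolding jordan_nf_def by force
  ultimately show "fst p = 1" using pk by simp
qed

lemma diagonalization_col_eigenvector:
  fixes A :: "'a::comm_ring_1 mat"
  assumes A: "A \<in> carrier_mat n n" and P: "P \<in> carrier_mat n n" and k: "k < n"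
    and AP: "A * P = P * mat n n (\<lambda>(i, j). if i = j then d i else 0)"
  shows "A *\<^sub>v col P k = d k \<cdot>\<^sub>v col P k"
proof (rule eq_vecI)
  fix i assume "i < dim_vec (d k \<cdot>\<^sub>v col P k)"
  hence i: "i < n" using P by simp
  have "(A *\<^sub>v col P k) $ i = (A * P) $$ (i, k)" using A P i k by simp
  also have "\<dots> = (\<Sum>j\<in>{0..<n}. P $$ (i, j) * (if j = k then d k else 0))"
    unfolding AP using P i k by (auto simp: scalar_prod_def intro: sum.cong)
  also have "\<dots> = (d k \<cdot>\<^sub>v col P k) $ i"
    using P i k by (simp add: if_distrib mult.commute cong: if_cong)
  finally show "(A *\<^sub>v col P k) $ i = (d k \<cdot>\<^sub>v col P k) $ i" .
qed (use A P in simp)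

lemma mult_mat_vec_zero: "A \<in> carrier_mat n m \<Longrightarrow> A *\<^sub>v 0\<^sub>v m = (0\<^sub>v n :: 'a::semiring_0 vec)"
  by (intro eq_vecI) (auto simp: scalar_prod_def)

lemma scalar_prod_mult_mat_vec_cols:
  fixes A :: "'a::comm_semiring_0 mat"
  assumes "A \<in> carrier_mat n k" "b \<in> carrier_vec k" "c \<in> carrier_vec n"
  shows "c \<bullet> (A *\<^sub>v b) = (\<Sum>j<k. b $ j * (c \<bullet> col A j))"
proof -
  have "c \<bullet> (A *\<^sub>v b) = (\<Sum>i<n. \<Sum>j<k. c $ i * (A $$ (i, j) * b $ j))"
    using assms by (simp add: scalar_prod_def sum_distrib_left atLeast0LessThan)
  also have "\<dots> = (\<Sum>j<k. b $ j * (c \<bullet> col A j))"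
    using assms by (subst sum.swap)
      (auto simp: scalar_prod_def sum_distrib_left atLeast0LessThan algebra_simps intro!: sum.cong)
  finally show ?thesis .
qed

lemma scalar_prod_mult_mat_vec_left:
  fixes A :: "'a::comm_semiring_0 mat"
  assumes "A \<in> carrier_mat n m" "a \<in> carrier_vec m" "b \<in> carrier_vec n"
  shows "(A *\<^sub>v a) \<bullet> b = a \<bullet> (transpose_mat A *\<^sub>v b)"
  using assms transpose_vec_mult_scalar[OF assms] comm_scalar_prod[of "A *\<^sub>v a" n b]
    comm_scalar_prod[of a m "transpose_mat A *\<^sub>v b"]
  by simp

lemma two_le_card_obtain:
  assumes "2 \<le> card K"
  obtains a b where "a \<in> K" "b \<in> K" "a \<noteq> b"
proof -
  obtain a B where "K = insert a B" "a \<notin> B" "1 \<le> card B"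
    using assms card_le_Suc_iff[of 1 K] by (auto simp: numeral_2_eq_2)
  moreover then obtain b where "b \<in> B" by fastforce
  ultimately show ?thesis using that by blast
qed

lemma left_inverse_row_col:
  assumes "Q \<in> carrier_mat m m" "P \<in> carrier_mat m m" "Q * P = 1\<^sub>m m" "i < m" "j < m"
  shows "row Q i \<bullet> col P j = (if i = j then 1 else 0)"
  using assms index_mult_mat(1)[of i Q j P] by simp

lemma pos_def_mat_solvable:
  fixes G :: "real mat"
  assumes G: "G \<in> carrier_mat m m"
    and pos: "\<And>a. a \<in> carrier_vec m \<Longrightarrow> a \<noteq> 0\<^sub>v m \<Longrightarrow> a \<bullet> (G *\<^sub>v a) > 0"
    and c: "c \<in> carrier_vec m"
  shows "\<exists>a\<in>carrier_vec m. G *\<^sub>v a = c"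
proof -
  have "det G \<noteq> 0"
    unfolding det_0_iff_vec_prod_zero_field[OF G] using pos by fastforce
  from det_non_zero_imp_unit[OF G this, of "()"]
  obtain H where H: "H \<in> carrier_mat m m" "G * H = 1\<^sub>m m"
    unfolding Units_def ring_mat_def by auto
  have "G *\<^sub>v (H *\<^sub>v c) = c" using G H c by (simp flip: assoc_mult_mat_vec)
  with H c show ?thesis by (intro bexI[of _ "H *\<^sub>v c"]) auto
qed

locale form_selfadjoint =
  fixes m :: nat and G T :: "real mat"
  assumes G_carrier: "G \<in> carrier_mat m m" and T_carrier: "T \<in> carrier_mat m m"
    and G_pos: "\<And>a. a \<in> carrier_vec m \<Longrightarrow> a \<noteq> 0\<^sub>v m \<Longrightarrow> a \<bullet> (G *\<^sub>v a) > 0"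
    and T_selfadjoint: "\<And>a b. a \<in> carrier_vec m \<Longrightarrow> b \<in> carrier_vec m \<Longrightarrow>
      (T *\<^sub>v a) \<bullet> (G *\<^sub>v b) = a \<bullet> (G *\<^sub>v (T *\<^sub>v b))"
begin

lemma eigenvector_iff: "eigenvector T p \<mu> \<longleftrightarrow> p \<in> carrier_vec m \<and> p \<noteq> 0\<^sub>v m \<and> T *\<^sub>v p = \<mu> \<cdot>\<^sub>v p"
  using T_carrier unfolding eigenvector_def by auto

lemma form_smult_right:
  "a \<in> carrier_vec m \<Longrightarrow> b \<in> carrier_vec m \<Longrightarrow> a \<bullet> (G *\<^sub>v (c \<cdot>\<^sub>v b)) = c * (a \<bullet> (G *\<^sub>v b))"
  using G_carrier by (simp add: mult_mat_vec)

lemma form_smult_left: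
  "a \<in> carrier_vec m \<Longrightarrow> b \<in> carrier_vec m \<Longrightarrow> (c \<cdot>\<^sub>v a) \<bullet> (G *\<^sub>v b) = c * (a \<bullet> (G *\<^sub>v b))"
  using G_carrier by simp

lemma eigenvectors_orthogonal:
  assumes a: "a \<in> carrier_vec m" and b: "b \<in> carrier_vec m"
    and Ta: "T *\<^sub>v a = \<mu> \<cdot>\<^sub>v a" and Tb: "T *\<^sub>v b = \<nu> \<cdot>\<^sub>v b" and "\<mu> \<noteq> \<nu>"
  shows "a \<bullet> (G *\<^sub>v b) = 0"
proof -
  have "\<mu> * (a \<bullet> (G *\<^sub>v b)) = (T *\<^sub>v a) \<bullet> (G *\<^sub>v b)"
    unfolding Ta using a b by (simp add: form_smult_left)
  also have "\<dots> = a \<bullet> (G *\<^sub>v (T *\<^sub>v b))" using a b by (rule T_selfadjoint)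
  also have "\<dots> = \<nu> * (a \<bullet> (G *\<^sub>v b))" unfolding Tb using a b by (rule form_smult_right)
  finally show ?thesis using \<open>\<mu> \<noteq> \<nu>\<close> by simp
qed

lemma char_matrix_selfadjoint:
  assumes a: "a \<in> carrier_vec m" and b: "b \<in> carrier_vec m"
  shows "(char_matrix T \<mu> *\<^sub>v a) \<bullet> (G *\<^sub>v b) = a \<bullet> (G *\<^sub>v (char_matrix T \<mu> *\<^sub>v b))"
proof -
  have C: "\<And>c. c \<in> carrier_vec m \<Longrightarrow> char_matrix T \<mu> *\<^sub>v c = T *\<^sub>v c - \<mu> \<cdot>\<^sub>v c"
    using T_carrier unfolding char_matrix_def
    by (intro eq_vecI) (auto simp: add_mult_distrib_mat_vec)
  have "(char_matrix T \<mu> *\<^sub>v a) \<bullet> (G *\<^sub>v b) = (T *\<^sub>v a) \<bullet> (G *\<^sub>v b) - \<mu> * (a \<bullet> (G *\<^sub>v b))"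
    using a b G_carrier T_carrier by (simp add: C minus_scalar_prod_distrib[of _ m])
  also have "\<dots> = a \<bullet> (G *\<^sub>v (T *\<^sub>v b)) - \<mu> * (a \<bullet> (G *\<^sub>v b))"
    using a b by (simp add: T_selfadjoint)
  also have "\<dots> = a \<bullet> (G *\<^sub>v (char_matrix T \<mu> *\<^sub>v b))"
    using a b G_carrier T_carrier
    by (simp add: C mult_minus_distrib_mat_vec mult_mat_vec scalar_prod_minus_distrib[of _ m])
  finally show ?thesis .
qed

lemma kernel_char_matrix_square:
  "mat_kernel (char_matrix T \<mu> ^\<^sub>m 2) = mat_kernel (char_matrix T \<mu> ^\<^sub>m 1)"
proof -
  define C where "C = char_matrix T \<mu>"
  have C_carrier: "C \<in> carrier_mat m m" unfolding C_def using T_carrier by simp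
  have "mat_kernel (C * C) \<subseteq> mat_kernel C"
  proof
    fix a assume "a \<in> mat_kernel (C * C)"
    hence a: "a \<in> carrier_vec m" and CCa: "C *\<^sub>v (C *\<^sub>v a) = 0\<^sub>v m"
      using mat_kernelD[of "C * C" m m a] C_carrier by auto
    have Ca: "C *\<^sub>v a \<in> carrier_vec m" using C_carrier a by simp
    have "(C *\<^sub>v a) \<bullet> (G *\<^sub>v (C *\<^sub>v a)) = a \<bullet> (G *\<^sub>v (C *\<^sub>v (C *\<^sub>v a)))"
      using char_matrix_selfadjoint[OF a Ca, of \<mu>] unfolding C_def .
    also have "\<dots> = 0" unfolding CCa mult_mat_vec_zero[OF G_carrier] using a by simp
    finally have "C *\<^sub>v a = 0\<^sub>v m" using G_pos[OF Ca] by fastforce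
    thus "a \<in> mat_kernel C" by (rule mat_kernelI[OF C_carrier a])
  qed
  moreover have "mat_kernel C \<subseteq> mat_kernel (C * C)"
    by (rule mat_kernel_mult_subset[OF C_carrier C_carrier])
  ultimately show ?thesis
    using C_carrier by (simp add: C_def[symmetric] numeral_2_eq_2)
qed

lemma T_jordan_nf_blocks_size_one: "jordan_nf T n_as \<Longrightarrow> \<forall>p\<in>set n_as. fst p = 1"
  by (erule jordan_nf_blocks_size_one)
    (simp add: dim_gen_eigenspace_def kernel_dim_def kernel_char_matrix_square)

lemma eigenbasis_exists:
  assumes splits: "char_poly T = (\<Prod>a\<leftarrow>es. [:- a, 1:])"
  obtains P Q d where "P \<in> carrier_mat m m" "Q \<in> carrier_mat m m" "P * Q = 1\<^sub>m m" "Q * P = 1\<^sub>m m"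
    "\<And>k. k < m \<Longrightarrow> eigenvector T (col P k) (d k)"
    "\<And>\<mu>. Polynomial.order \<mu> (char_poly T) = card {k. k < m \<and> d k = \<mu>}"
proof -
  obtain n_as where jnf: "jordan_nf T n_as" using jordan_nf_exists[OF T_carrier splits] by blast
  have ones: "\<forall>p\<in>set n_as. fst p = 1" using jnf by (rule T_jordan_nf_blocks_size_one)
  define d where "d k = snd (n_as ! k)" for k
  obtain P Q where "similar_mat_wit T (jordan_matrix n_as) P Q"
    using jnf unfolding jordan_nf_def similar_mat_def by blast
  hence P: "P \<in> carrier_mat m m" and Q: "Q \<in> carrier_mat m m"
    and J: "jordan_matrix n_as \<in> carrier_mat m m" and PQ: "P * Q = 1\<^sub>m m"
    and QP: "Q * P = 1\<^sub>m m" and T_eq: "T = P * jordan_matrix n_as * Q"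
    using T_carrier unfolding similar_mat_wit_def Let_def by auto
  have len: "length n_as = m"
    using J unfolding jordan_matrix_diagonal[OF ones] by auto
  have diag: "jordan_matrix n_as = mat m m (\<lambda>(i, j). if i = j then d i else 0)"
    unfolding jordan_matrix_diagonal[OF ones] len d_def ..
  have "T * P = P * jordan_matrix n_as"
    unfolding T_eq using P Q J
    by (simp add: assoc_mult_mat[of _ m m _ m _ m] QP right_mult_one_mat[OF J])
  hence "T *\<^sub>v col P k = d k \<cdot>\<^sub>v col P k" if "k < m" for k
    unfolding diag using that by (intro diagonalization_col_eigenvector[OF T_carrier P])
  moreover have "col P k \<noteq> 0\<^sub>v m" if "k < m" for k
    using left_inverse_row_col[OF Q P QP that that] Q that by auto
  ultimately have "eigenvector T (col P k) (d k)" if "k < m" for k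
    using that P by (simp add: eigenvector_iff)
  moreover have "Polynomial.order \<mu> (char_poly T) = card {k. k < m \<and> d k = \<mu>}" for \<mu>
  proof -
    have "\<forall>p\<in>set (filter (\<lambda>p. snd p = \<mu>) n_as). fst p = 1" using ones by auto
    hence "sum_list (map fst (filter (\<lambda>p. snd p = \<mu>) n_as)) = length (filter (\<lambda>p. snd p = \<mu>) n_as)"
      by (induct n_as) auto
    thus ?thesis unfolding jordan_nf_order[OF jnf] length_filter_conv_card len d_def .
  qed
  ultimately show ?thesis using that P Q PQ QP by blast
qed

lemma multiple_root_independent_eigenvectors:
  assumes splits: "char_poly T = (\<Prod>a\<leftarrow>es. [:- a, 1:])"
    and multiple: "2 \<le> Polynomial.order \<mu> (char_poly T)"
  shows "\<exists>a b. eigenvector T a \<mu> \<and> eigenvector T b \<mu> \<and> (\<forall>c. a \<noteq> c \<cdot>\<^sub>v b)"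
proof -
  obtain P Q d where P: "P \<in> carrier_mat m m" and Q: "Q \<in> carrier_mat m m"
    and "P * Q = 1\<^sub>m m" and QP: "Q * P = 1\<^sub>m m"
    and eig: "\<And>k. k < m \<Longrightarrow> eigenvector T (col P k) (d k)"
    and order: "\<And>\<mu>. Polynomial.order \<mu> (char_poly T) = card {k. k < m \<and> d k = \<mu>}"
    using eigenbasis_exists[OF splits] by blast
  have "2 \<le> card {k. k < m \<and> d k = \<mu>}" using multiple unfolding order .
  then obtain k1 k2 where k: "k1 < m" "k2 < m" "k1 \<noteq> k2" and d: "d k1 = \<mu>" "d k2 = \<mu>"
    by (elim two_le_card_obtain) blast
  note dual = left_inverse_row_col[OF Q P QP]
  have "col P k1 \<noteq> c \<cdot>\<^sub>v col P k2" for c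
  proof
    assume eq: "col P k1 = c \<cdot>\<^sub>v col P k2"
    have "0 = row Q k2 \<bullet> col P k1" using dual k by simp
    also have "\<dots> = c" unfolding eq using dual[of k2 k2] Q P k by simp
    finally have "col P k1 = 0\<^sub>v m" unfolding eq using P by (intro eq_vecI) simp_all
    thus False using eig[OF k(1)] by (simp add: eigenvector_iff)
  qed
  moreover have "eigenvector T (col P k1) \<mu>" "eigenvector T (col P k2) \<mu>"
    using eig[OF k(1)] eig[OF k(2)] unfolding d by simp_all
  ultimately show ?thesis by blast
qed

lemma form_vanishes_if_orthogonal_to_eigenvectors:
  assumes splits: "char_poly T = (\<Prod>a\<leftarrow>es. [:- a, 1:])" and a: "a \<in> carrier_vec m"
    and orth: "\<And>p \<mu>. eigenvector T p \<mu> \<Longrightarrow> \<mu> \<noteq> 0 \<Longrightarrow> a \<bullet> (G *\<^sub>v p) = 0"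
  shows "a \<bullet> (G *\<^sub>v (T *\<^sub>v a)) = 0"
proof -
  obtain P Q d where P: "P \<in> carrier_mat m m" and Q: "Q \<in> carrier_mat m m"
    and PQ: "P * Q = 1\<^sub>m m" and "Q * P = 1\<^sub>m m"
    and eig: "\<And>k. k < m \<Longrightarrow> eigenvector T (col P k) (d k)"
    and "\<And>\<mu>. Polynomial.order \<mu> (char_poly T) = card {k. k < m \<and> d k = \<mu>}"
    using eigenbasis_exists[OF splits] by blast
  define \<beta> where "\<beta> = Q *\<^sub>v a"
  have \<beta>: "\<beta> \<in> carrier_vec m" unfolding \<beta>_def using Q a by simp
  have "a = P *\<^sub>v \<beta>" unfolding \<beta>_def using P Q a by (simp flip: assoc_mult_mat_vec add: PQ)
  hence "a \<bullet> (G *\<^sub>v (T *\<^sub>v a)) = a \<bullet> ((G * T * P) *\<^sub>v \<beta>)"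
    using assoc_mult_mat_vec[OF mult_carrier_mat[OF G_carrier T_carrier] P \<beta>]
      G_carrier T_carrier P \<beta> by simp
  also have "\<dots> = (\<Sum>k<m. \<beta> $ k * (a \<bullet> col (G * T * P) k))"
    using G_carrier T_carrier P \<beta> a
    by (intro scalar_prod_mult_mat_vec_cols) (rule mult_carrier_mat)+
  also have "\<dots> = (\<Sum>k<m. \<beta> $ k * (d k * (a \<bullet> (G *\<^sub>v col P k))))"
  proof (intro sum.cong refl)
    fix k assume "k \<in> {..<m}"
    hence "col (G * T * P) k = G *\<^sub>v (T *\<^sub>v col P k)"
      using col_mult2[OF mult_carrier_mat[OF G_carrier T_carrier] P] G_carrier T_carrier P by simp
    thus "\<beta> $ k * (a \<bullet> col (G * T * P) k) = \<beta> $ k * (d k * (a \<bullet> (G *\<^sub>v col P k)))"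
      using eig[of k] \<open>k \<in> {..<m}\<close> a by (simp add: eigenvector_iff form_smult_right)
  qed
  also have "\<dots> = 0"
  proof (intro sum.neutral ballI)
    fix k assume "k \<in> {..<m}"
    thus "\<beta> $ k * (d k * (a \<bullet> (G *\<^sub>v col P k))) = 0"
      using orth[OF eig[of k]] by (cases "d k = 0") auto
  qed
  finally show ?thesis .
qed

lemma G_solvable: "c \<in> carrier_vec m \<Longrightarrow> \<exists>a\<in>carrier_vec m. G *\<^sub>v a = c"
  using G_carrier G_pos by (rule pos_def_mat_solvable)

end

definition feat_adj :: "('x \<Rightarrow> 'h::real_inner) \<Rightarrow> (nat \<Rightarrow> 'x) \<Rightarrow> nat \<Rightarrow> 'h \<Rightarrow> real vec" where
  "feat_adj \<phi> x m h = vec m (\<lambda>j. inner (\<phi> (x j)) h)"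

lemma feat_adj_carrier [simp]: "feat_adj \<phi> x m h \<in> carrier_vec m"
  by (simp add: feat_adj_def)

lemma gram_carrier [simp]: "gram \<phi> x m \<in> carrier_mat m m"
  by (simp add: gram_def)

lemma gram_mult_vec_carrier [simp]: "gram \<phi> x m *\<^sub>v a \<in> carrier_vec m"
  by (intro carrier_vecI) (simp add: gram_def)

lemma inner_feat_comb_left:
  "a \<in> carrier_vec m \<Longrightarrow> inner (feat_comb \<phi> x m a) h = a \<bullet> feat_adj \<phi> x m h"
  by (simp add: feat_comb_def feat_adj_def inner_sum_left scalar_prod_def atLeast0LessThan)

lemma feat_adj_feat_comb:
  "a \<in> carrier_vec m \<Longrightarrow> feat_adj \<phi> x m (feat_comb \<phi> x m a) = gram \<phi> x m *\<^sub>v a"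
  by (intro eq_vecI)
    (simp_all add: feat_adj_def feat_comb_def gram_def inner_sum_right scalar_prod_def
      atLeast0LessThan mult.commute)

lemma inner_feat_comb:
  "a \<in> carrier_vec m \<Longrightarrow> b \<in> carrier_vec m \<Longrightarrow>
    inner (feat_comb \<phi> x m a) (feat_comb \<phi> x m b) = a \<bullet> (gram \<phi> x m *\<^sub>v b)"
  by (simp add: inner_feat_comb_left feat_adj_feat_comb)

lemma gram_scalar_prod_commute:
  "a \<in> carrier_vec m \<Longrightarrow> b \<in> carrier_vec m \<Longrightarrow>
    a \<bullet> (gram \<phi> x m *\<^sub>v b) = b \<bullet> (gram \<phi> x m *\<^sub>v a)"
  by (metis inner_feat_comb inner_commute)

lemma feat_comb_smult:
  "a \<in> carrier_vec m \<Longrightarrow> feat_comb \<phi> x m (c \<cdot>\<^sub>v a) = c *\<^sub>R feat_comb \<phi> x m a"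
  by (simp add: feat_comb_def scaleR_sum_right)

lemma feat_comb_diff:
  "a \<in> carrier_vec m \<Longrightarrow> b \<in> carrier_vec m \<Longrightarrow>
    feat_comb \<phi> x m (a - b) = feat_comb \<phi> x m a - feat_comb \<phi> x m b"
  by (simp add: feat_comb_def scaleR_diff_left sum_subtractf)

lemma feat_comb_eq_zero_imp:
  "lin_indep_family \<phi> x m \<Longrightarrow> a \<in> carrier_vec m \<Longrightarrow> feat_comb \<phi> x m a = 0 \<Longrightarrow> a = 0\<^sub>v m"
  unfolding lin_indep_family_def feat_comb_def by (intro eq_vecI) auto

lemma feat_comb_inj:
  assumes "lin_indep_family \<phi> x m" "a \<in> carrier_vec m" "b \<in> carrier_vec m"
    and "feat_comb \<phi> x m a = feat_comb \<phi> x m b"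
  shows "a = b"
proof (rule eq_vecI)
  have "a - b = 0\<^sub>v m"
    using assms by (intro feat_comb_eq_zero_imp) (simp_all add: feat_comb_diff)
  moreover fix i assume "i < dim_vec b"
  ultimately have "(a - b) $ i = 0" using assms(3) by simp
  thus "a $ i = b $ i" using assms(2,3) \<open>i < dim_vec b\<close> by simp
qed (use assms in simp)

lemma gram_pos:
  "lin_indep_family \<phi> x m \<Longrightarrow> a \<in> carrier_vec m \<Longrightarrow> a \<noteq> 0\<^sub>v m \<Longrightarrow> a \<bullet> (gram \<phi> x m *\<^sub>v a) > 0"
  by (metis inner_feat_comb feat_comb_eq_zero_imp inner_gt_zero_iff)

lemma op_S_eq:
  "B \<in> carrier_mat n m \<Longrightarrow>
    op_S \<phi> x m \<psi> y n B h = feat_comb \<psi> y n (B *\<^sub>v feat_adj \<phi> x m h)"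
  by (simp add: op_S_def feat_comb_def feat_adj_def scalar_prod_def atLeast0LessThan)

lemma linear_op_S: "linear (op_S \<phi> x m \<psi> y n B)"
  by (intro linearI)
    (simp_all add: op_S_def inner_add_right distrib_left sum.distrib scaleR_add_left
      scaleR_sum_right sum_distrib_left mult.left_commute)

lemma sv_space_scaleR:
  assumes "linear S" "v \<in> sv_space S \<sigma>"
  shows "c *\<^sub>R v \<in> sv_space S \<sigma>"
  using assms by (simp add: sv_space_def linear_scale)

lemma dim_one_collinear:
  fixes V :: "'a::real_vector set"
  assumes "dim V = 1" "a \<in> V" "b \<in> V" "b \<noteq> 0"
  shows "\<exists>c. a = c *\<^sub>R b"
proof -
  obtain E where "E \<subseteq> V" "V \<subseteq> span E" "card E = 1"
    using basis_exists[of V] assms(1) by metis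
  then obtain e where "V \<subseteq> span {e}" by (metis card_1_singletonE)
  then obtain s t where "a = s *\<^sub>R e" "b = t *\<^sub>R e"
    using assms(2,3) unfolding span_singleton by blast
  with assms(4) show ?thesis by (intro exI[of _ "s / t"]) auto
qed

locale feature_operator =
  fixes \<phi> :: "'x \<Rightarrow> 'h::real_inner" and x :: "nat \<Rightarrow> 'x" and m :: nat
    and \<psi> :: "'y \<Rightarrow> 'f::real_inner" and y :: "nat \<Rightarrow> 'y" and n :: nat
    and B :: "real mat"
  assumes B_carrier: "B \<in> carrier_mat n m" and indep_\<Phi>: "lin_indep_family \<phi> x m"
begin

abbreviation "\<Phi> \<equiv> feat_comb \<phi> x m"
abbreviation "G \<equiv> gram \<phi> x m"
abbreviation "S \<equiv> op_S \<phi> x m \<psi> y n B"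
abbreviation "T \<equiv> transpose_mat B * gram \<psi> y n * B * gram \<phi> x m"

lemma T_carrier: "T \<in> carrier_mat m m"
  using B_carrier by (auto intro!: mult_carrier_mat)

lemma B_mult_vec_carrier [simp]: "B *\<^sub>v c \<in> carrier_vec n"
  using B_carrier by (intro carrier_vecI) simp

lemma T_mult_vec_carrier [simp]: "T *\<^sub>v c \<in> carrier_vec m"
  using B_carrier by (intro carrier_vecI) simp

lemma T_mult_vec:
  assumes b: "b \<in> carrier_vec m"
  shows "T *\<^sub>v b = transpose_mat B *\<^sub>v (gram \<psi> y n *\<^sub>v (B *\<^sub>v (G *\<^sub>v b)))"
proof -
  have Bt: "transpose_mat B \<in> carrier_mat m n" using B_carrier by simp
  have "T *\<^sub>v b = (transpose_mat B * gram \<psi> y n * B) *\<^sub>v (G *\<^sub>v b)"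
    using B_carrier b by (auto intro!: assoc_mult_mat_vec mult_carrier_mat)
  also have "\<dots> = (transpose_mat B * gram \<psi> y n) *\<^sub>v (B *\<^sub>v (G *\<^sub>v b))"
    using B_carrier b by (auto intro!: assoc_mult_mat_vec mult_carrier_mat)
  also have "\<dots> = transpose_mat B *\<^sub>v (gram \<psi> y n *\<^sub>v (B *\<^sub>v (G *\<^sub>v b)))"
    by (rule assoc_mult_mat_vec[OF Bt gram_carrier]) simp
  finally show ?thesis .
qed

lemma inner_op_S_feat_comb:
  assumes b: "b \<in> carrier_vec m"
  shows "inner (S h) (S (\<Phi> b)) = inner h (\<Phi> (T *\<^sub>v b))"
proof -
  have BGb: "B *\<^sub>v (G *\<^sub>v b) \<in> carrier_vec n" using B_carrier b by simp
  have "inner (S h) (S (\<Phi> b))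
      = inner (feat_comb \<psi> y n (B *\<^sub>v feat_adj \<phi> x m h)) (feat_comb \<psi> y n (B *\<^sub>v (G *\<^sub>v b)))"
    using B_carrier b by (simp add: op_S_eq feat_adj_feat_comb)
  also have "\<dots> = (B *\<^sub>v feat_adj \<phi> x m h) \<bullet> (gram \<psi> y n *\<^sub>v (B *\<^sub>v (G *\<^sub>v b)))"
    using B_carrier BGb by (simp add: inner_feat_comb)
  also have "\<dots> = feat_adj \<phi> x m h \<bullet> (T *\<^sub>v b)"
    using B_carrier BGb b by (simp add: scalar_prod_mult_mat_vec_left[of _ n m] T_mult_vec)
  also have "\<dots> = inner h (\<Phi> (T *\<^sub>v b))"
    using T_carrier b
    by (simp add: inner_feat_comb_left inner_commute[of h] comm_scalar_prod[of _ m])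
  finally show ?thesis .
qed

lemma inner_op_S_feat_comb_both:
  "a \<in> carrier_vec m \<Longrightarrow> b \<in> carrier_vec m \<Longrightarrow>
    inner (S (\<Phi> a)) (S (\<Phi> b)) = a \<bullet> (G *\<^sub>v (T *\<^sub>v b))"
  using T_carrier by (simp add: inner_op_S_feat_comb inner_feat_comb)

sublocale form_selfadjoint m G T
proof
  fix a b :: "real vec" assume "a \<in> carrier_vec m" "b \<in> carrier_vec m"
  thus "(T *\<^sub>v a) \<bullet> (G *\<^sub>v b) = a \<bullet> (G *\<^sub>v (T *\<^sub>v b))"
    using T_carrier inner_op_S_feat_comb_both[of a b] inner_op_S_feat_comb_both[of b a]
    by (metis gram_scalar_prod_commute inner_commute mult_mat_vec_carrier)
qed (simp_all add: T_carrier gram_pos[OF indep_\<Phi>])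

lemma feat_comb_eigenvector_in_sv_space:
  assumes "0 \<le> \<mu>" "a \<in> carrier_vec m" "T *\<^sub>v a = \<mu> \<cdot>\<^sub>v a"
  shows "\<Phi> a \<in> sv_space S (sqrt \<mu>)"
  using assms by (simp add: sv_space_def inner_op_S_feat_comb feat_comb_smult)

lemma eigenvectors_collinear:
  assumes mult1: "\<And>\<sigma>. singular_value S \<sigma> \<Longrightarrow> sv_multiplicity S \<sigma> = 1"
    and \<mu>: "0 < \<mu>" and a: "a \<in> carrier_vec m" "T *\<^sub>v a = \<mu> \<cdot>\<^sub>v a" and b: "eigenvector T b \<mu>"
  shows "\<exists>c. a = c \<cdot>\<^sub>v b"
proof -
  have b': "b \<in> carrier_vec m" "b \<noteq> 0\<^sub>v m" "T *\<^sub>v b = \<mu> \<cdot>\<^sub>v b"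
    using b by (simp_all add: eigenvector_iff)
  have a_in: "\<Phi> a \<in> sv_space S (sqrt \<mu>)" and b_in: "\<Phi> b \<in> sv_space S (sqrt \<mu>)"
    using \<mu> a b' by (simp_all add: feat_comb_eigenvector_in_sv_space)
  have "\<Phi> b \<noteq> 0" using feat_comb_eq_zero_imp[OF indep_\<Phi>] b' by blast
  with \<mu> b_in have "singular_value S (sqrt \<mu>)" unfolding singular_value_def by auto
  with mult1 have "dim (sv_space S (sqrt \<mu>)) = 1" unfolding sv_multiplicity_def by blast
  then obtain c where "\<Phi> a = c *\<^sub>R \<Phi> b"
    using dim_one_collinear a_in b_in \<open>\<Phi> b \<noteq> 0\<close> by blast
  hence "a = c \<cdot>\<^sub>v b"
    using a b' by (intro feat_comb_inj[OF indep_\<Phi>]) (simp_all add: feat_comb_smult)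
  thus ?thesis ..
qed

end

locale svd_data = feature_operator +
  fixes r :: nat and lam :: "nat \<Rightarrow> real" and w :: "nat \<Rightarrow> real vec"
  assumes mult1: "\<And>\<sigma>. singular_value S \<sigma> \<Longrightarrow> sv_multiplicity S \<sigma> = 1"
    and lam_nonzero: "\<And>i. i < r \<Longrightarrow> lam i \<noteq> 0"
    and lam_eigs: "char_poly T = monom 1 (m - r) * (\<Prod>i<r. [:- lam i, 1:])"
    and w_eigvec: "\<And>i. i < r \<Longrightarrow> w i \<in> carrier_vec m \<and> w i \<noteq> 0\<^sub>v m \<and> T *\<^sub>v w i = lam i \<cdot>\<^sub>v w i"
begin

definition right_sing_vec where
  "right_sing_vec i = (1 / sqrt (w i \<bullet> (G *\<^sub>v w i))) *\<^sub>R \<Phi> (w i)"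

definition left_sing_vec where
  "left_sing_vec i = (1 / sqrt (lam i)) *\<^sub>R S (right_sing_vec i)"

lemma w_carrier: "i < r \<Longrightarrow> w i \<in> carrier_vec m"
  using w_eigvec by blast

lemma w_eigenvector: "i < r \<Longrightarrow> eigenvector T (w i) (lam i)"
  using w_eigvec by (simp add: eigenvector_iff)

lemma w_norm_pos: "i < r \<Longrightarrow> 0 < w i \<bullet> (G *\<^sub>v w i)"
  using w_eigvec gram_pos[OF indep_\<Phi>] by blast

lemma char_poly_T_splits: "char_poly T = (\<Prod>a\<leftarrow>replicate (m - r) 0 @ map lam [0..<r]. [:- a, 1:])"
proof -
  have "(\<Prod>i\<leftarrow>[0..<r]. [:- lam i, 1:]) = (\<Prod>i<r. [:- lam i, 1:])"
    by (subst prod.distinct_set_conv_list[symmetric]) (auto simp: atLeast0LessThan)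
  thus ?thesis by (simp add: lam_eigs prod_list_replicate o_def monom_altdef)
qed

lemma lam_pos: "i < r \<Longrightarrow> 0 < lam i"
proof -
  assume i: "i < r"
  have "0 \<le> inner (S (\<Phi> (w i))) (S (\<Phi> (w i)))" by simp
  also have "\<dots> = lam i * (w i \<bullet> (G *\<^sub>v w i))"
    using w_eigvec[OF i] by (simp add: inner_op_S_feat_comb_both form_smult_right)
  finally show ?thesis
    using w_norm_pos[OF i] lam_nonzero[OF i] by (simp add: zero_le_mult_iff)
qed

lemma eigenvalue_eq_lam:
  assumes "eigenvector T p \<mu>" "\<mu> \<noteq> 0"
  shows "\<exists>i<r. \<mu> = lam i"
proof -
  have "poly (char_poly T) \<mu> = 0"
    using assms(1) eigenvalue_root_char_poly[OF T_carrier] unfolding eigenvalue_def by blast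
  hence "\<mu> ^ (m - r) * (\<Prod>i<r. \<mu> - lam i) = 0"
    by (simp add: lam_eigs poly_monom poly_prod)
  with assms(2) show ?thesis by auto
qed

lemma lam_inj: "i < r \<Longrightarrow> j < r \<Longrightarrow> lam i = lam j \<Longrightarrow> i = j"
proof (rule ccontr)
  \<comment> \<open>a double root would give two independent eigenvectors, but its eigenspace is a line\<close>
  assume i: "i < r" and j: "j < r" and eq: "lam i = lam j" and "i \<noteq> j"
  define f where "f k = [:- lam k, 1:]" for k
  have "(\<Prod>k<r. f k) = f i * (\<Prod>k\<in>{..<r} - {i}. f k)"
    using i by (simp add: prod.remove)
  also have "(\<Prod>k\<in>{..<r} - {i}. f k) = f j * (\<Prod>k\<in>{..<r} - {i} - {j}. f k)"
    using i j \<open>i \<noteq> j\<close> by (subst prod.remove[of _ j]) auto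
  finally have "f i * f j dvd (\<Prod>k<r. f k)" by simp
  hence "[:- lam i, 1:] ^ 2 dvd char_poly T"
    unfolding lam_eigs f_def eq by (simp add: power2_eq_square dvd_mult)
  moreover have "char_poly T \<noteq> 0" using degree_monic_char_poly[OF T_carrier] by auto
  ultimately have "2 \<le> Polynomial.order (lam i) (char_poly T)" by (rule order_max)
  then obtain a b where "eigenvector T a (lam i)" "eigenvector T b (lam i)" "\<forall>c. a \<noteq> c \<cdot>\<^sub>v b"
    using multiple_root_independent_eigenvectors[OF char_poly_T_splits] by blast
  with eigenvectors_collinear[OF mult1 lam_pos[OF i]] show False
    by (auto simp: eigenvector_iff)
qed

lemma eigenvector_collinear_w:
  assumes "eigenvector T p \<mu>" "\<mu> \<noteq> 0"
  shows "\<exists>i<r. \<exists>c. p = c \<cdot>\<^sub>v w i"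
proof -
  obtain i where i: "i < r" "\<mu> = lam i" using eigenvalue_eq_lam[OF assms] by blast
  with assms(1) show ?thesis
    using eigenvectors_collinear[OF mult1 lam_pos[OF i(1)] _ _ w_eigenvector[OF i(1)]]
    by (auto simp: eigenvector_iff)
qed

lemma w_orthogonal: "i < r \<Longrightarrow> j < r \<Longrightarrow> i \<noteq> j \<Longrightarrow> w i \<bullet> (G *\<^sub>v w j) = 0"
  using w_eigvec lam_inj by (blast intro: eigenvectors_orthogonal)

lemma right_sing_vec_orthonormal:
  "i < r \<Longrightarrow> j < r \<Longrightarrow> inner (right_sing_vec i) (right_sing_vec j) = (if i = j then 1 else 0)"
  using w_carrier w_norm_pos[of i] unfolding right_sing_vec_def
  by (cases "i = j") (simp_all add: inner_feat_comb w_orthogonal real_sqrt_mult[symmetric])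

lemma right_sing_vec_in_sv_space: "i < r \<Longrightarrow> right_sing_vec i \<in> sv_space S (sqrt (lam i))"
  using w_eigvec lam_pos[of i] unfolding right_sing_vec_def
  by (intro sv_space_scaleR[OF linear_op_S] feat_comb_eigenvector_in_sv_space) auto

lemma left_sing_vec_orthonormal:
  assumes i: "i < r" and j: "j < r"
  shows "inner (left_sing_vec i) (left_sing_vec j) = (if i = j then 1 else 0)"
proof -
  have "inner (left_sing_vec i) (left_sing_vec j) =
      1 / sqrt (lam i) * (1 / sqrt (lam j)) * inner (S (right_sing_vec i)) (S (right_sing_vec j))"
    by (simp add: left_sing_vec_def)
  also have "inner (S (right_sing_vec i)) (S (right_sing_vec j)) = lam j * (if i = j then 1 else 0)"
    using right_sing_vec_in_sv_space[OF j] lam_pos[OF j] right_sing_vec_orthonormal[OF i j]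
    unfolding sv_space_def by simp
  finally show ?thesis
    using lam_pos[OF j] by (simp add: real_sqrt_mult[symmetric])
qed

lemma op_S_vanishes_on_orthogonal_complement:
  assumes orth: "\<And>i. i < r \<Longrightarrow> inner (right_sing_vec i) z = 0"
  shows "S z = 0"
proof -
  obtain a where a: "a \<in> carrier_vec m" "G *\<^sub>v a = feat_adj \<phi> x m z"
    using G_solvable[of "feat_adj \<phi> x m z"] by auto
  have Sz: "S z = S (\<Phi> a)"
    using B_carrier a by (simp add: op_S_eq feat_adj_feat_comb)
  have "a \<bullet> (G *\<^sub>v p) = 0" if eig: "eigenvector T p \<mu>" "\<mu> \<noteq> 0" for p \<mu>
  proof -
    obtain i c where i: "i < r" and p: "p = c \<cdot>\<^sub>v w i"
      using eigenvector_collinear_w[OF eig] by blast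
    have "inner (\<Phi> (w i)) z = 0"
      using orth[OF i] w_norm_pos[OF i] by (simp add: right_sing_vec_def)
    hence "w i \<bullet> (G *\<^sub>v a) = 0" using a w_carrier[OF i] by (simp add: inner_feat_comb_left)
    hence "a \<bullet> (G *\<^sub>v w i) = 0"
      by (subst gram_scalar_prod_commute) (use a w_carrier[OF i] in auto)
    thus ?thesis unfolding p using a w_carrier[OF i] by (simp add: form_smult_right)
  qed
  hence "a \<bullet> (G *\<^sub>v (T *\<^sub>v a)) = 0"
    using form_vanishes_if_orthogonal_to_eigenvectors[OF char_poly_T_splits a(1)] by blast
  thus ?thesis unfolding Sz using inner_op_S_feat_comb_both[OF a(1) a(1)] by simp
qed

lemma op_S_svd: "S h = (\<Sum>i<r. sqrt (lam i) *\<^sub>R tensor_op (left_sing_vec i) (right_sing_vec i) h)"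
proof -
  define z where "z = h - (\<Sum>i<r. inner (right_sing_vec i) h *\<^sub>R right_sing_vec i)"
  have "inner (right_sing_vec j) z = 0" if j: "j < r" for j
  proof -
    have "inner (right_sing_vec j) z =
        inner (right_sing_vec j) h - (\<Sum>i<r. inner (right_sing_vec i) h * (if j = i then 1 else 0))"
      using j by (simp add: z_def inner_diff_right inner_sum_right right_sing_vec_orthonormal)
    thus ?thesis using j by (simp add: if_distrib cong: if_cong)
  qed
  hence "S z = 0" by (rule op_S_vanishes_on_orthogonal_complement)
  hence "S h = (\<Sum>i<r. inner (right_sing_vec i) h *\<^sub>R S (right_sing_vec i))"
    unfolding z_def by (simp add: linear_diff[OF linear_op_S] linear_sum[OF linear_op_S]
        linear_scale[OF linear_op_S])
  also have "\<dots> = (\<Sum>i<r. sqrt (lam i) *\<^sub>R tensor_op (left_sing_vec i) (right_sing_vec i) h)"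
  proof (intro sum.cong refl)
    fix i assume "i \<in> {..<r}"
    hence "0 < lam i" by (simp add: lam_pos)
    thus "inner (right_sing_vec i) h *\<^sub>R S (right_sing_vec i) =
        sqrt (lam i) *\<^sub>R tensor_op (left_sing_vec i) (right_sing_vec i) h"
      by (simp add: tensor_op_def left_sing_vec_def)
  qed
  finally show ?thesis .
qed

end

theorem proposition3p13:
  fixes \<phi> :: "'x \<Rightarrow> 'h::{real_inner,complete_space}"
    and \<psi> :: "'y \<Rightarrow> 'f::{real_inner,complete_space}"
    and x :: "nat \<Rightarrow> 'x" and y :: "nat \<Rightarrow> 'y" and m n r :: nat
    and B :: "real mat" and lam :: "nat \<Rightarrow> real" and w :: "nat \<Rightarrow> real vec"
  defines "S \<equiv> op_S \<phi> x m \<psi> y n B"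
    and "G\<^sub>\<Phi> \<equiv> gram \<phi> x m" and "G\<^sub>\<Psi> \<equiv> gram \<psi> y n"
  defines "M \<equiv> transpose_mat B * G\<^sub>\<Psi> * B"
  defines "v \<equiv> (\<lambda>i. (1 / sqrt (scalar_prod (w i) (G\<^sub>\<Phi> *\<^sub>v w i))) *\<^sub>R feat_comb \<phi> x m (w i))"
  defines "u \<equiv> (\<lambda>i. (1 / sqrt (lam i)) *\<^sub>R S (v i))"
  assumes rkhs_H: "rkhs_feature \<phi>" and rkhs_F: "rkhs_feature \<psi>"
    and indep_\<Phi>: "lin_indep_family \<phi> x m" and indep_\<Psi>: "lin_indep_family \<psi> y n"
    and B_dim: "B \<in> carrier_mat n m"
    and mult1: "\<And>\<sigma>. singular_value S \<sigma> \<Longrightarrow> sv_multiplicity S \<sigma> = 1"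
    and lam_nonzero: "\<And>i. i < r \<Longrightarrow> lam i \<noteq> 0"
    and lam_eigs: "char_poly (M * G\<^sub>\<Phi>) = monom 1 (m - r) * (\<Prod>i<r. [:- lam i, 1:])"
    and w_eigvec: "\<And>i. i < r \<Longrightarrow> w i \<in> carrier_vec m \<and> w i \<noteq> 0\<^sub>v m \<and>
                          (M * G\<^sub>\<Phi>) *\<^sub>v w i = lam i \<cdot>\<^sub>v w i"
  shows "(\<forall>i<r. lam i > 0)
    \<and> (\<forall>i<r. \<forall>j<r. inner (u i) (u j) = (if i = j then 1 else 0))
    \<and> (\<forall>i<r. \<forall>j<r. inner (v i) (v j) = (if i = j then 1 else 0))
    \<and> S = (\<lambda>h. \<Sum>i<r. sqrt (lam i) *\<^sub>R tensor_op (u i) (v i) h)"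
proof -
  interpret svd_data \<phi> x m \<psi> y n B r lam w
    by unfold_locales
      (use B_dim indep_\<Phi> mult1 lam_nonzero lam_eigs w_eigvec in
        \<open>simp_all add: S_def M_def G\<^sub>\<Phi>_def G\<^sub>\<Psi>_def\<close>)
  have v_eq: "v = right_sing_vec"
    by (rule ext) (simp add: v_def G\<^sub>\<Phi>_def right_sing_vec_def)
  have u_eq: "u = left_sing_vec"
    by (rule ext) (simp add: u_def S_def v_eq left_sing_vec_def)
  show ?thesis
    unfolding u_eq v_eq S_def
    using lam_pos left_sing_vec_orthonormal right_sing_vec_orthonormal op_S_svd by auto
qed

end
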